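(* Let $\lambda$ be a generic normalized additively alternating $n\times n$ complex matrix with biresidue matrix $b$, and let $I\subseteq\{0,\dots,n-2\}$ be such that $\{i,i+1\}$ is a smoothable edge of $b$ for every $i\in I$. Then no linear combination $\sum_{i\in I}\nu_i\boldsymbol\theta_i$ with all $\nu_i\in\mathbb{Z}_{\ge0}$ is an obstructed weight.
   Context: Additively alternating: $\lambda_{ji}=-\lambda_{ij}$; normalized: rows sum to $0$. $\lambda$ is generic if it has rank $n-1$ and every relevant $\operatorname{EExp}(\lambda)$-Hochschild-contributing weight is $\lambda$-Poisson-contributing, where $\operatorname{EExp}(\lambda)=(e^{\lambda_{ij}})$; a weight $\mathbf w\in\mathbb{Z}^n$ is relevant if $w_i\ge-1$, $\sum w_i=0$; $q$-Hochschild-contributing if $w_i\ge-1$ for all $i$ and $\prod_jq_{ij}^{w_j}=1$ whenever $w_i\ge0$; $\lambda$-Poisson-contributing if $w_i\ge-1$ for all $i$ and $\sum_j\lambda_{ij}w_j=0$ whenever $w_i\ge0$. The biresidue matrix is the unique normalized alternating $b$ with $b|_\Delta=(\lambda|_\Delta)^{-1}$, $\Delta=\{z\in\mathbb{C}^n:\sum z_i=0\}$. The edge $\{i,j\}$ is smoothable if $b_{ij}\ne0$ and $(b_{jk}+b_{ki})/b_{ij}\in\mathbb{Z}_{\ge0}$ for $k\ne i,j$; its smoothable weight has entries $-1$ at $i,j$ and $(b_{jk}+b_{ki})/b_{ij}$ at $k\ne i,j$; $\boldsymbol\theta_i$ denotes the smoothable weight of $\{i,i+1\}$. A weight $\mathbf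 w\in\mathbb{Z}^n$ is obstructed if there are three distinct indices $i,j,k$ with $w_i=w_j=w_k=-1$, $w_\ell\ge0$ for all $\ell\ne i,j,k$, and $\mathbf w$ is a complex linear combination of the rows $b_{i\bullet},b_{j\bullet},b_{k\bullet}$. *)

theory Defs
  imports Complex_Main "Jordan_Normal_Form.DL_Rank"
begin

text \<open>Conventions: an n x n complex matrix is a function nat => nat => complex,
  only the entries with indices < n are relevant (indices 0..n-1).
  A weight is a function nat => int, only the entries with indices < n are relevant.\<close>

definition additively_alternating :: "nat \<Rightarrow> (nat \<Rightarrow> nat \<Rightarrow> complex) \<Rightarrow> bool" where
  "additively_alternating n l \<longleftrightarrow> (\<forall>i<n. \<forall>j<n. l j i = - l i j)"

definition normalized :: "nat \<Rightarrow> (nat \<Rightarrow> nat \<Rightarrow> complex) \<Rightarrow> bool" where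
  "normalized n l \<longleftrightarrow> (\<forall>i<n. (\<Sum>j<n. l i j) = 0)"

definition EExp :: "(nat \<Rightarrow> nat \<Rightarrow> complex) \<Rightarrow> nat \<Rightarrow> nat \<Rightarrow> complex" where
  "EExp l = (\<lambda>i j. exp (l i j))"

definition relevant_weight :: "nat \<Rightarrow> (nat \<Rightarrow> int) \<Rightarrow> bool" where
  "relevant_weight n w \<longleftrightarrow> (\<forall>i<n. w i \<ge> -1) \<and> (\<Sum>i<n. w i) = 0"

definition hochschild_contributing :: "nat \<Rightarrow> (nat \<Rightarrow> nat \<Rightarrow> complex) \<Rightarrow> (nat \<Rightarrow> int) \<Rightarrow> bool" where
  "hochschild_contributing n q w \<longleftrightarrow>
     (\<forall>i<n. w i \<ge> -1) \<and> (\<forall>i<n. w i \<ge> 0 \<longrightarrow> (\<Prod>j<n. q i j powi w j) = 1)"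

definition poisson_contributing :: "nat \<Rightarrow> (nat \<Rightarrow> nat \<Rightarrow> complex) \<Rightarrow> (nat \<Rightarrow> int) \<Rightarrow> bool" where
  "poisson_contributing n l w \<longleftrightarrow>
     (\<forall>i<n. w i \<ge> -1) \<and> (\<forall>i<n. w i \<ge> 0 \<longrightarrow> (\<Sum>j<n. l i j * of_int (w j)) = 0)"

definition matrix_of :: "nat \<Rightarrow> (nat \<Rightarrow> nat \<Rightarrow> complex) \<Rightarrow> complex mat" where
  "matrix_of n l = mat n n (\<lambda>(i, j). l i j)"

definition generic :: "nat \<Rightarrow> (nat \<Rightarrow> nat \<Rightarrow> complex) \<Rightarrow> bool" where
  "generic n l \<longleftrightarrow> vec_space.rank n (matrix_of n l) = n - 1 \<and>
     (\<forall>w. relevant_weight n w \<longrightarrow> hochschild_contributing n (EExp l) w \<longrightarrow> poisson_contributing n l w)"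

definition Delta :: "nat \<Rightarrow> (nat \<Rightarrow> complex) set" where
  "Delta n = {z. (\<Sum>i<n. z i) = 0}"

definition mat_apply :: "nat \<Rightarrow> (nat \<Rightarrow> nat \<Rightarrow> complex) \<Rightarrow> (nat \<Rightarrow> complex) \<Rightarrow> nat \<Rightarrow> complex" where
  "mat_apply n A z = (\<lambda>i. \<Sum>j<n. A i j * z j)"

definition biresidue :: "nat \<Rightarrow> (nat \<Rightarrow> nat \<Rightarrow> complex) \<Rightarrow> (nat \<Rightarrow> nat \<Rightarrow> complex) \<Rightarrow> bool" where
  "biresidue n l b \<longleftrightarrow> normalized n b \<and> additively_alternating n b \<and>
     (\<forall>z\<in>Delta n. \<forall>i<n. mat_apply n b (mat_apply n l z) i = z i) \<and>
     (\<forall>z\<in>Delta n. \<forall>i<n. mat_apply n l (mat_apply n b z) i = z i)"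

definition smoothable :: "nat \<Rightarrow> (nat \<Rightarrow> nat \<Rightarrow> complex) \<Rightarrow> nat \<Rightarrow> nat \<Rightarrow> bool" where
  "smoothable n b i j \<longleftrightarrow> i < n \<and> j < n \<and> i \<noteq> j \<and> b i j \<noteq> 0 \<and>
     (\<forall>k<n. k \<noteq> i \<longrightarrow> k \<noteq> j \<longrightarrow> (\<exists>m::nat. (b j k + b k i) / b i j = of_nat m))"

definition smoothable_weight :: "nat \<Rightarrow> (nat \<Rightarrow> nat \<Rightarrow> complex) \<Rightarrow> nat \<Rightarrow> nat \<Rightarrow> nat \<Rightarrow> int" where
  "smoothable_weight n b i j k =
     (if k = i \<or> k = j then -1 else int (THE m::nat. (b j k + b k i) / b i j = of_nat m))"

definition theta :: "nat \<Rightarrow> (nat \<Rightarrow> nat \<Rightarrow> complex) \<Rightarrow> nat \<Rightarrow> nat \<Rightarrow> int" where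
  "theta n b i = smoothable_weight n b i (i + 1)"

definition obstructed :: "nat \<Rightarrow> (nat \<Rightarrow> nat \<Rightarrow> complex) \<Rightarrow> (nat \<Rightarrow> int) \<Rightarrow> bool" where
  "obstructed n b w \<longleftrightarrow> (\<exists>i<n. \<exists>j<n. \<exists>k<n. i \<noteq> j \<and> i \<noteq> k \<and> j \<noteq> k \<and>
     w i = -1 \<and> w j = -1 \<and> w k = -1 \<and>
     (\<forall>l<n. l \<noteq> i \<longrightarrow> l \<noteq> j \<longrightarrow> l \<noteq> k \<longrightarrow> w l \<ge> 0) \<and>
     (\<exists>c1 c2 c3 :: complex. \<forall>l<n. of_int (w l) = c1 * b i l + c2 * b j l + c3 * b k l))"

end

(*
  Put g(i) = nu(i) / b(i, i+1) for i in I and g(i) = 0 otherwise. Then the weight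
  w = sum nu(i) theta_i has entries w(k) = sum_i g(i) (b(k, i) - b(k, i+1)), i.e. w = b Z for the
  backward difference Z of g. If w were obstructed, w = sum_j C(j) b(j, -) with C supported on
  three indices a < s < m at which w = -1. Antisymmetry of b makes w . C = 0, so sum C = 0; then
  Z + C lies in Delta and in the kernel of b, so Z = -C. Hence g is a step function: -C(a) on
  [a, s), C(m) on [s, m) and zero elsewhere. Splitting w = P + Q into the contributions of the
  edges left of s and of the others, telescoping gives P(a) = P(s) and Q(s) = Q(m), while
  P(m) >= 0 and Q(a) >= 0 because theta_i is nonnegative off the edge {i, i+1}.
  Thus w(s) = P(a) + Q(m) <= -2, a contradiction.
*)
theory Submission
  imports Defs
begin

lemma alternating_swap:
  assumes "additively_alternating n b" "i < n" "j < n"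
  shows "b j i = - b i j"
  using assms unfolding additively_alternating_def by blast

lemma alternating_diag_eq_zero:
  assumes "additively_alternating n b" "k < n"
  shows "b k k = 0"
  using alternating_swap[OF assms assms(2)] by simp

lemma alternating_endpoint_diff:
  assumes "additively_alternating n b" "p < n" "q < n"
  shows "b p p - b p q = b q p - b q q"
  using alternating_swap[OF assms] alternating_diag_eq_zero[OF assms(1)] assms(2,3) by simp

lemma alternating_quadratic_form_eq_zero:
  assumes alt: "additively_alternating n b"
  shows "(\<Sum>k<n. (\<Sum>j<n. z j * b j k) * z k) = 0"
proof -
  define X where "X = (\<Sum>k<n. \<Sum>j<n. z j * b j k * z k)"
  have "X = (\<Sum>j<n. \<Sum>k<n. z j * b j k * z k)" unfolding X_def by (rule sum.swap)
  also have "\<dots> = (\<Sum>j<n. \<Sum>k<n. - (z k * b k j * z j))"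
  proof (intro sum.cong refl)
    fix j k assume "j \<in> {..<n}" "k \<in> {..<n}"
    then show "z j * b j k * z k = - (z k * b k j * z j)"
      using alternating_swap[OF alt, of k j] by simp
  qed
  also have "\<dots> = - X" by (simp add: X_def sum_negf)
  finally have "X = 0" by simp
  then show ?thesis by (simp add: X_def sum_distrib_right)
qed

lemma biresidue_kernel_Delta:
  assumes "biresidue n l b" "z \<in> Delta n" "\<forall>k<n. mat_apply n b z k = 0" "j < n"
  shows "z j = 0"
proof -
  have "z j = mat_apply n l (mat_apply n b z) j"
    using assms(1,2,4) unfolding biresidue_def by metis
  also have "\<dots> = 0"
    unfolding mat_apply_def[of n l] using assms(3) by (intro sum.neutral) simp
  finally show ?thesis .
qed

lemma smoothable_weight_eq:
  assumes alt: "additively_alternating n b" and sm: "smoothable n b i j" and k: "k < n"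
  shows "of_int (smoothable_weight n b i j k) = (b k i - b k j) / b i j"
proof -
  have ij: "i < n" "j < n" "i \<noteq> j" and nz: "b i j \<noteq> 0"
    using sm unfolding smoothable_def by auto
  show ?thesis
  proof (cases "k = i \<or> k = j")
    case True
    then show ?thesis
      using nz ij alternating_swap[OF alt, of i j] alternating_diag_eq_zero[OF alt]
      by (auto simp: smoothable_weight_def)
  next
    case False
    then obtain m :: nat where m: "(b j k + b k i) / b i j = of_nat m"
      using sm k unfolding smoothable_def by auto
    then have "(THE m::nat. (b j k + b k i) / b i j = of_nat m) = m"
      by (intro the_equality) auto
    then show ?thesis
      using False m alternating_swap[OF alt, of k j] k ij by (simp add: smoothable_weight_def)
  qed
qed

lemma smoothable_weight_nonneg: "k \<noteq> i \<Longrightarrow> k \<noteq> j \<Longrightarrow> smoothable_weight n b i j k \<ge> 0"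
  by (simp add: smoothable_weight_def)

definition backward_diff :: "(nat \<Rightarrow> 'a::ab_group_add) \<Rightarrow> nat \<Rightarrow> 'a" where
  "backward_diff g j = g j - (case j of 0 \<Rightarrow> 0 | Suc i \<Rightarrow> g i)"

lemma sum_backward_diff: "(\<Sum>j<Suc i. backward_diff g j) = g i"
  by (induction i) (simp_all add: backward_diff_def)

lemma sum_by_parts_backward_diff:
  fixes f g :: "nat \<Rightarrow> 'a::comm_ring"
  shows "(\<Sum>i<Suc n. g i * (f i - f (Suc i))) = (\<Sum>j<Suc n. f j * backward_diff g j) - g n * f (Suc n)"
  by (induction n) (simp_all add: backward_diff_def algebra_simps)

lemma sum_telescope_const:
  fixes f :: "nat \<Rightarrow> 'a::comm_ring"
  assumes "{p..<q} \<subseteq> A" "finite A" "\<forall>i\<in>{p..<q}. g i = c" "\<forall>i\<in>A - {p..<q}. g i = 0" "p \<le> q"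
  shows "(\<Sum>i\<in>A. g i * (f i - f (Suc i))) = c * (f p - f q)"
proof -
  have "(\<Sum>i\<in>A. g i * (f i - f (Suc i))) = (\<Sum>i\<in>{p..<q}. c * (f i - f (Suc i)))"
    using assms(1-4) by (intro sum.mono_neutral_cong_right) auto
  also have "\<dots> = - c * (\<Sum>i\<in>{p..<q}. f (Suc i) - f i)"
    by (simp add: sum_distrib_left algebra_simps sum_negf[symmetric])
  also have "\<dots> = c * (f p - f q)"
    unfolding sum_Suc_diff'[OF assms(5)] by (simp add: algebra_simps)
  finally show ?thesis .
qed

definition edge_coeff :: "(nat \<Rightarrow> nat \<Rightarrow> complex) \<Rightarrow> nat set \<Rightarrow> (nat \<Rightarrow> nat) \<Rightarrow> nat \<Rightarrow> complex" where
  "edge_coeff b I \<nu> i = (if i \<in> I then of_nat (\<nu> i) / b i (Suc i) else 0)"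

lemma theta_combination_eq_edge_sum:
  assumes alt: "additively_alternating n b" and sm: "\<forall>i\<in>I. smoothable n b i (i + 1)"
    and A: "finite A" and k: "k < n"
  shows "of_int (\<Sum>i\<in>I \<inter> A. int (\<nu> i) * theta n b i k)
    = (\<Sum>i\<in>A. edge_coeff b I \<nu> i * (b k i - b k (Suc i)))"
proof -
  have "of_int (\<Sum>i\<in>I \<inter> A. int (\<nu> i) * theta n b i k)
      = (\<Sum>i\<in>I \<inter> A. of_nat (\<nu> i) * of_int (theta n b i k) :: complex)"
    by simp
  also have "\<dots> = (\<Sum>i\<in>I \<inter> A. edge_coeff b I \<nu> i * (b k i - b k (Suc i)))"
  proof (rule sum.cong)
    fix i assume "i \<in> I \<inter> A"
    then show "of_nat (\<nu> i) * of_int (theta n b i k) = edge_coeff b I \<nu> i * (b k i - b k (Suc i))"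
      using smoothable_weight_eq[OF alt _ k, of i "Suc i"] sm
      by (simp add: theta_def edge_coeff_def)
  qed simp
  also have "\<dots> = (\<Sum>i\<in>A. edge_coeff b I \<nu> i * (b k i - b k (Suc i)))"
    using A by (intro sum.mono_neutral_left) (auto simp: edge_coeff_def)
  finally show ?thesis .
qed

lemma theta_combination_nonneg:
  assumes "\<forall>i\<in>J. k \<noteq> i \<and> k \<noteq> Suc i"
  shows "0 \<le> (\<Sum>i\<in>J. int (\<nu> i) * theta n b i k)"
  using assms smoothable_weight_nonneg by (auto simp: theta_def intro!: sum_nonneg)

lemma theta_combination_eq_mat_apply:
  assumes alt: "additively_alternating n b" and I: "I \<subseteq> {i. i + 2 \<le> n}"
    and sm: "\<forall>i\<in>I. smoothable n b i (i + 1)" and k: "k < n"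
  shows "of_int (\<Sum>i\<in>I. int (\<nu> i) * theta n b i k)
    = mat_apply n b (backward_diff (edge_coeff b I \<nu>)) k"
proof -
  obtain n' where n': "n = Suc n'" using k not0_implies_Suc by fastforce
  have "n' \<notin> I" using I n' by auto
  then have last: "edge_coeff b I \<nu> n' = 0" by (simp add: edge_coeff_def)
  have "I \<inter> {..<n} = I" using I by auto
  then have "of_int (\<Sum>i\<in>I. int (\<nu> i) * theta n b i k)
      = of_int (\<Sum>i\<in>I \<inter> {..<n}. int (\<nu> i) * theta n b i k)"
    by simp
  also have "\<dots> = (\<Sum>i<n. edge_coeff b I \<nu> i * (b k i - b k (Suc i)))"
    by (rule theta_combination_eq_edge_sum[OF alt sm finite_lessThan k])
  also have "\<dots> = (\<Sum>j<n. b k j * backward_diff (edge_coeff b I \<nu>) j)"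
    unfolding n' sum_by_parts_backward_diff last by simp
  finally show ?thesis by (simp add: mat_apply_def)
qed

lemma row_combination_coeffs_sum_eq_zero:
  fixes w C :: "nat \<Rightarrow> complex"
  assumes alt: "additively_alternating n b"
    and span: "\<forall>x<n. w x = (\<Sum>j<n. C j * b j x)"
    and supp: "\<forall>j<n. C j \<noteq> 0 \<longrightarrow> w j = -1"
  shows "(\<Sum>j<n. C j) = 0"
proof -
  have "- (\<Sum>k<n. C k) = (\<Sum>k<n. w k * C k)"
    using supp by (auto simp: sum_negf[symmetric] intro!: sum.cong)
  also have "\<dots> = (\<Sum>k<n. (\<Sum>j<n. C j * b j k) * C k)"
    using span by simp
  also have "\<dots> = 0" by (rule alternating_quadratic_form_eq_zero[OF alt])
  finally show ?thesis by simp
qed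

lemma edge_coeff_eq_neg_prefix_sum:
  fixes n :: nat and b :: "nat \<Rightarrow> nat \<Rightarrow> complex" and I :: "nat set" and \<nu> :: "nat \<Rightarrow> nat"
  defines "w \<equiv> \<lambda>k. \<Sum>i\<in>I. int (\<nu> i) * theta n b i k"
  assumes bir: "biresidue n l b" and I: "I \<subseteq> {i. i + 2 \<le> n}"
    and sm: "\<forall>i\<in>I. smoothable n b i (i + 1)"
    and span: "\<forall>x<n. of_int (w x) = (\<Sum>j<n. C j * b j x)"
    and supp: "\<forall>j<n. C j \<noteq> 0 \<longrightarrow> w j = -1"
    and i: "i < n"
  shows "edge_coeff b I \<nu> i = - (\<Sum>j\<le>i. C j)"
proof -
  define Z where "Z = backward_diff (edge_coeff b I \<nu>)"
  have alt: "additively_alternating n b" using bir by (simp add: biresidue_def)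
  have wZ: "of_int (w k) = mat_apply n b Z k" if "k < n" for k
    unfolding w_def Z_def using theta_combination_eq_mat_apply[OF alt I sm that] by simp
  have sumC: "(\<Sum>j<n. C j) = 0"
    by (rule row_combination_coeffs_sum_eq_zero[OF alt, of "\<lambda>k. of_int (w k)"]) (use span supp in auto)
  obtain n' where n': "n = Suc n'" using i not0_implies_Suc by fastforce
  have "n' \<notin> I" using I n' by auto
  then have sumZ: "(\<Sum>j<n. Z j) = 0"
    unfolding n' Z_def sum_backward_diff by (simp add: edge_coeff_def)
  have bC: "mat_apply n b C k = - of_int (w k)" if k: "k < n" for k
  proof -
    have "mat_apply n b C k = (\<Sum>j<n. - (C j * b j k))"
      unfolding mat_apply_def using alternating_swap[OF alt k] by (intro sum.cong) auto
    then show ?thesis using span k by (simp add: sum_negf)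
  qed
  have ZC: "Z j + C j = 0" if "j < n" for j
  proof (rule biresidue_kernel_Delta[OF bir _ _ that])
    show "(\<lambda>j. Z j + C j) \<in> Delta n"
      using sumZ sumC by (simp add: Delta_def sum.distrib)
    show "\<forall>k<n. mat_apply n b (\<lambda>j. Z j + C j) k = 0"
      using wZ bC by (simp add: mat_apply_def distrib_left sum.distrib)
  qed
  have "edge_coeff b I \<nu> i = (\<Sum>j<Suc i. Z j)" unfolding Z_def sum_backward_diff ..
  also have "\<dots> = (\<Sum>j\<le>i. - C j)"
    unfolding lessThan_Suc_atMost using ZC i by (intro sum.cong) (auto simp: eq_neg_iff_add_eq_0)
  finally show ?thesis by (simp add: sum_negf)
qed

lemma theta_partial_sum_endpoints_eq:
  assumes alt: "additively_alternating n b" and sm: "\<forall>i\<in>I. smoothable n b i (i + 1)"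
    and A: "finite A" "{p..<q} \<subseteq> A" and pq: "p \<le> q" "q < n"
    and const: "\<forall>i\<in>{p..<q}. edge_coeff b I \<nu> i = c"
    and zero: "\<forall>i\<in>A - {p..<q}. edge_coeff b I \<nu> i = 0"
  shows "(\<Sum>i\<in>I \<inter> A. int (\<nu> i) * theta n b i p) = (\<Sum>i\<in>I \<inter> A. int (\<nu> i) * theta n b i q)"
proof -
  have at_vertex: "of_int (\<Sum>i\<in>I \<inter> A. int (\<nu> i) * theta n b i k) = c * (b k p - b k q)"
    if "k < n" for k
    unfolding theta_combination_eq_edge_sum[OF alt sm A(1) that]
    using sum_telescope_const[OF A(2,1) const zero pq(1)] .
  have "(of_int (\<Sum>i\<in>I \<inter> A. int (\<nu> i) * theta n b i p) :: complex)
      = of_int (\<Sum>i\<in>I \<inter> A. int (\<nu> i) * theta n b i q)"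
    using at_vertex[of p] at_vertex[of q] alternating_endpoint_diff[OF alt, of p q] pq by simp
  then show ?thesis by (simp only: of_int_eq_iff)
qed

lemma prefix_sum_three_support:
  fixes C :: "nat \<Rightarrow> 'a::comm_monoid_add"
  assumes "a < s" "s < m" and supp: "\<forall>j. j \<notin> {a, s, m} \<longrightarrow> C j = 0"
  shows "(\<Sum>j\<le>i. C j)
    = (if a \<le> i then C a else 0) + (if s \<le> i then C s else 0) + (if m \<le> i then C m else 0)"
proof -
  have "C = (\<lambda>j. (if j = a then C a else 0) + (if j = s then C s else 0) + (if j = m then C m else 0))"
    using assms by (auto simp: fun_eq_iff)
  then have "(\<Sum>j\<le>i. C j) = (\<Sum>j\<le>i. (if j = a then C a else 0) + (if j = s then C s else 0)
      + (if j = m then C m else 0))"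
    by metis
  then show ?thesis by (simp add: sum.distrib)
qed

lemma theta_combination_not_minus_one_at_three:
  fixes n :: nat and b :: "nat \<Rightarrow> nat \<Rightarrow> complex" and I :: "nat set" and \<nu> :: "nat \<Rightarrow> nat"
  defines "w \<equiv> \<lambda>k. \<Sum>i\<in>I. int (\<nu> i) * theta n b i k"
  assumes alt: "additively_alternating n b" and I: "I \<subseteq> {i. i + 2 \<le> n}"
    and sm: "\<forall>i\<in>I. smoothable n b i (i + 1)"
    and order: "a < s" "s < m" "m < n"
    and coeff: "\<forall>i<n. edge_coeff b I \<nu> i = - (\<Sum>j\<le>i. C j)"
    and supp: "\<forall>j. j \<notin> {a, s, m} \<longrightarrow> C j = 0"
  shows "\<not> (w a = -1 \<and> w s = -1 \<and> w m = -1)"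
proof
  assume minus_one: "w a = -1 \<and> w s = -1 \<and> w m = -1"
  have step: "edge_coeff b I \<nu> i
      = - ((if a \<le> i then C a else 0) + (if s \<le> i then C s else 0) + (if m \<le> i then C m else 0))"
    if "i < n" for i
    using coeff prefix_sum_three_support[OF order(1,2) supp] that by simp
  have "n - 1 \<notin> I" using I by auto
  then have "edge_coeff b I \<nu> (n - 1) = 0" by (simp add: edge_coeff_def)
  moreover have "a \<le> n - 1" "s \<le> n - 1" "m \<le> n - 1" using order by auto
  ultimately have "- (C a + C s + C m) = 0" using step[of "n - 1"] order by simp
  then have last: "C m = - (C a + C s)" by (metis add_eq_0_iff neg_equal_0_iff_equal)
  define P where "P k = (\<Sum>i\<in>I \<inter> {..<s}. int (\<nu> i) * theta n b i k)" for k
  define Q where "Q k = (\<Sum>i\<in>I \<inter> {s..<n}. int (\<nu> i) * theta n b i k)" for k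
  have "I \<subseteq> {..<n}" using I by auto
  then have split: "(I \<inter> {..<s}) \<union> (I \<inter> {s..<n}) = I" and "finite I"
    by (auto intro: finite_subset)
  have w_split: "w k = P k + Q k" for k
  proof -
    have "P k + Q k = (\<Sum>i\<in>(I \<inter> {..<s}) \<union> (I \<inter> {s..<n}). int (\<nu> i) * theta n b i k)"
      unfolding P_def Q_def using \<open>finite I\<close> by (intro sum.union_disjoint[symmetric]) auto
    then show ?thesis by (simp only: w_def split)
  qed
  have "P a = P s"
    unfolding P_def using order step
    by (intro theta_partial_sum_endpoints_eq[OF alt sm, where c = "- C a"]) auto
  moreover have "Q s = Q m"
    unfolding Q_def using order step last
    by (intro theta_partial_sum_endpoints_eq[OF alt sm, where c = "- (C a + C s)"]) auto
  moreover have "P m \<ge> 0"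
    unfolding P_def using order by (intro theta_combination_nonneg) auto
  moreover have "Q a \<ge> 0"
    unfolding Q_def using order by (intro theta_combination_nonneg) auto
  ultimately show False using minus_one w_split[of a] w_split[of s] w_split[of m] by linarith
qed

lemma three_distinct_sorted:
  fixes i j k :: nat
  assumes "i \<noteq> j" "i \<noteq> k" "j \<noteq> k"
  obtains a s m where "a < s" "s < m" "{a, s, m} = {i, j, k}"
  using assms by (metis insert_commute linorder_neqE_nat)

theorem lemma5p3:
  fixes n :: nat and l b :: "nat \<Rightarrow> nat \<Rightarrow> complex" and I :: "nat set"
  assumes "additively_alternating n l"
    and "normalized n l"
    and "generic n l"
    and "biresidue n l b"
    and "I \<subseteq> {i. i + 2 \<le> n}"
    and "\<forall>i\<in>I. smoothable n b i (i + 1)"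
  shows "\<forall>\<nu> :: nat \<Rightarrow> nat. \<not> obstructed n b (\<lambda>k. \<Sum>i\<in>I. int (\<nu> i) * theta n b i k)"
proof (intro allI notI)
  fix \<nu> :: "nat \<Rightarrow> nat"
  define w where "w = (\<lambda>k. \<Sum>i\<in>I. int (\<nu> i) * theta n b i k)"
  assume "obstructed n b (\<lambda>k. \<Sum>i\<in>I. int (\<nu> i) * theta n b i k)"
  then obtain i j k c1 c2 c3 where ijk: "i < n" "j < n" "k < n" "i \<noteq> j" "i \<noteq> k" "j \<noteq> k"
    and minus_one: "w i = -1" "w j = -1" "w k = -1"
    and span: "\<forall>x<n. of_int (w x) = c1 * b i x + c2 * b j x + c3 * b k x"
    unfolding obstructed_def w_def by blast
  define C where "C x = of_bool (x = i) * c1 + of_bool (x = j) * c2 + of_bool (x = k) * c3" for x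
  have "\<forall>x<n. of_int (w x) = (\<Sum>y<n. C y * b y x)"
    using span ijk by (simp add: C_def distrib_right sum.distrib mult.assoc)
  moreover have "\<forall>y<n. C y \<noteq> 0 \<longrightarrow> w y = -1" using minus_one by (auto simp: C_def)
  ultimately have coeff: "\<forall>x<n. edge_coeff b I \<nu> x = - (\<Sum>y\<le>x. C y)"
    using edge_coeff_eq_neg_prefix_sum[OF assms(4-6)] unfolding w_def by blast
  obtain a s m where order: "a < s" "s < m" and sorted: "{a, s, m} = {i, j, k}"
    using three_distinct_sorted ijk(4-6) .
  then have "a \<in> {i, j, k}" "s \<in> {i, j, k}" "m \<in> {i, j, k}" by blast+
  then have "m < n" "w a = -1" "w s = -1" "w m = -1" using ijk minus_one by auto
  moreover have "\<forall>y. y \<notin> {a, s, m} \<longrightarrow> C y = 0" using sorted by (auto simp: C_def)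
  moreover have "additively_alternating n b" using assms(4) by (simp add: biresidue_def)
  ultimately show False
    using theta_combination_not_minus_one_at_three[OF _ assms(5,6) order _ coeff] unfolding w_def by blast
qed

end
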